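(* Let $H$ be a separable real Hilbert space with complete orthonormal system $(e_k)_{k\ge1}$, $F\subset H$ compact, and $\mu$ a probability measure on $F$. Then for every $h\in F$, \[\lim_{\min(d,n)\to\infty}\Lambda^\mu_{d,n}(h)=\mu(\{h\}).\]
   Context: $c_0(\mathbb{N})$ is the set of sequences of nonnegative integers with finitely many nonzero entries; for $a\in c_0(\mathbb{N})$, $f^a:=\prod_k\langle f,e_k\rangle^{a_k}$. A polynomial on $H$ is a finite linear combination $p(f)=\sum_a p_a f^a$; its algebraic degree is $\max\{\sum_k a_k: p_a\neq0\}$ and its harmonic degree is $\max\{k: a_k\neq0\text{ for some } a\text{ with } p_a\neq0\}$. $P_{d,n}$ is the space of polynomials of algebraic degree at most $d$ and harmonic degree at most $n$. The Christoffel function is $\Lambda^\mu_{d,n}(h)=\min\{\int_F p(f)^2\,d\mu(f): p\in P_{d,n},\ p(h)=1\}$ for $h\in H$. *)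

theory Defs
  imports "HOL-Probability.Probability"
begin

definition multi_indices :: "nat \<Rightarrow> nat \<Rightarrow> (nat \<Rightarrow> nat) set" where
  "multi_indices d n = {a. (\<forall>k. a k \<noteq> 0 \<longrightarrow> k \<in> {1..n}) \<and> sum a {1..n} \<le> d}"

definition monomial :: "(nat \<Rightarrow> 'a::real_inner) \<Rightarrow> nat \<Rightarrow> (nat \<Rightarrow> nat) \<Rightarrow> 'a \<Rightarrow> real" where
  "monomial e n a f = (\<Prod>k\<in>{1..n}. (inner f (e k)) ^ (a k))"

definition poly_space :: "(nat \<Rightarrow> 'a::real_inner) \<Rightarrow> nat \<Rightarrow> nat \<Rightarrow> ('a \<Rightarrow> real) set" where
  "poly_space e d n =
     {p. \<exists>c :: (nat \<Rightarrow> nat) \<Rightarrow> real.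
           p = (\<lambda>f. \<Sum>a\<in>multi_indices d n. c a * monomial e n a f)}"

text \<open>Christoffel function (the minimum, written as an infimum).\<close>
definition christoffel :: "'a::real_inner measure \<Rightarrow> (nat \<Rightarrow> 'a) \<Rightarrow> nat \<Rightarrow> nat \<Rightarrow> 'a \<Rightarrow> real" where
  "christoffel M e d n h =
     Inf {integral\<^sup>L M (\<lambda>f. (p f)\<^sup>2) | p. p \<in> poly_space e d n \<and> p h = 1}"

end

theory Submission imports Defs begin

text \<open>
  Every admissible p satisfies p^2 \<ge> indicator {h}, hence \<Lambda>_{d,n}(h) \<ge> \<mu>{h}.
  Conversely, choose C > |f - h|^2 on F and put q_N(f) = \<Sum>_{k \<le> N} \<langle>f - h, e_k\<rangle>^2.
  The peak polynomials (1 - q_N/C)^N lie in P_{2N,N}, equal 1 at h, take values in [0,1] on F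
  by Bessel's inequality, and tend to 0 at every f \<noteq> h: by completeness some
  \<langle>f - h, e_K\<rangle> \<noteq> 0, so for N \<ge> K they are at most (1 - \<langle>f - h, e_K\<rangle>^2/C)^N.
  By dominated convergence their squared integrals tend to \<mu>{h}, and they bound
  \<Lambda>_{d,n}(h) from above as soon as d \<ge> 2N and n \<ge> N.
\<close>

lemma finite_multi_indices: "finite (multi_indices d n)"
proof (rule finite_subset)
  show "multi_indices d n \<subseteq> {a. \<forall>k. (k \<in> {1..n} \<longrightarrow> a k \<in> {0..d}) \<and> (k \<notin> {1..n} \<longrightarrow> a k = 0)}"
  proof safe
    fix a k assume a: "a \<in> multi_indices d n" and k: "k \<in> {1..n}"
    have "a k \<le> sum a {1..n}" using k by (intro member_le_sum) auto
    then show "a k \<in> {0..d}" using a by (auto simp: multi_indices_def)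
  qed (auto simp: multi_indices_def)
  show "finite {a. \<forall>k. (k \<in> {1..n} \<longrightarrow> a k \<in> {0..d}) \<and> (k \<notin> {1..n} \<longrightarrow> a k = (0::nat))}"
    by (rule finite_set_of_finite_funs) auto
qed

lemma multi_indices_support: "a \<in> multi_indices d n \<Longrightarrow> k \<notin> {1..n} \<Longrightarrow> a k = 0"
  by (auto simp: multi_indices_def)

lemma multi_indices_mono:
  assumes "d \<le> d'" "n \<le> n'"
  shows "multi_indices d n \<subseteq> multi_indices d' n'"
proof
  fix a assume a: "a \<in> multi_indices d n"
  have "sum a {1..n'} = sum a {1..n}"
    by (rule sum.mono_neutral_right) (use assms(2) multi_indices_support[OF a] in auto)
  then show "a \<in> multi_indices d' n'"
    using a assms unfolding multi_indices_def mem_Collect_eq atLeastAtMost_iff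
    by (metis order_trans)
qed

lemma multi_indices_add:
  assumes "a \<in> multi_indices d n" "b \<in> multi_indices d' n"
  shows "(\<lambda>k. a k + b k) \<in> multi_indices (d + d') n"
  using assms by (auto simp: multi_indices_def sum.distrib)

lemma monomial_add: "monomial e n (\<lambda>k. a k + b k) f = monomial e n a f * monomial e n b f"
  by (simp add: monomial_def power_add prod.distrib)

lemma monomial_harmonic_mono:
  assumes "a \<in> multi_indices d n" "n \<le> n'"
  shows "monomial e n' a = monomial e n a"
  unfolding monomial_def
  by (intro ext prod.mono_neutral_right) (use assms multi_indices_support[OF assms(1)] in auto)

lemma poly_spaceI:
  "p = (\<lambda>f. \<Sum>a\<in>multi_indices d n. c a * monomial e n a f) \<Longrightarrow> p \<in> poly_space e d n"
  unfolding poly_space_def by blast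

lemma poly_spaceE:
  assumes "p \<in> poly_space e d n"
  obtains c where "p = (\<lambda>f. \<Sum>a\<in>multi_indices d n. c a * monomial e n a f)"
  using assms unfolding poly_space_def by blast

lemma poly_space_monomial:
  assumes "a \<in> multi_indices d n"
  shows "monomial e n a \<in> poly_space e d n"
proof (rule poly_spaceI)
  show "monomial e n a = (\<lambda>f. \<Sum>b\<in>multi_indices d n. (if b = a then 1 else 0) * monomial e n b f)"
    using assms by (intro ext) (simp add: finite_multi_indices if_distrib[of "\<lambda>c. c * _"] cong: if_cong)
qed

lemma poly_space_cmult:
  assumes "p \<in> poly_space e d n"
  shows "(\<lambda>f. r * p f) \<in> poly_space e d n"
proof -
  obtain c where "p = (\<lambda>f. \<Sum>a\<in>multi_indices d n. c a * monomial e n a f)"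
    using assms by (rule poly_spaceE)
  then have "(\<lambda>f. r * p f) = (\<lambda>f. \<Sum>a\<in>multi_indices d n. (r * c a) * monomial e n a f)"
    by (simp add: sum_distrib_left mult.assoc)
  then show ?thesis by (rule poly_spaceI)
qed

lemma poly_space_const: "(\<lambda>_. r) \<in> poly_space e d n"
proof -
  have "(\<lambda>_. 0) \<in> multi_indices d n" by (simp add: multi_indices_def)
  from poly_space_cmult[OF poly_space_monomial[OF this], of r]
  show ?thesis by (simp add: monomial_def)
qed

lemma poly_space_add:
  assumes "p \<in> poly_space e d n" "q \<in> poly_space e d n"
  shows "(\<lambda>f. p f + q f) \<in> poly_space e d n"
proof -
  obtain c where "p = (\<lambda>f. \<Sum>a\<in>multi_indices d n. c a * monomial e n a f)"
    using assms(1) by (rule poly_spaceE)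
  moreover obtain c' where "q = (\<lambda>f. \<Sum>a\<in>multi_indices d n. c' a * monomial e n a f)"
    using assms(2) by (rule poly_spaceE)
  ultimately have "(\<lambda>f. p f + q f) = (\<lambda>f. \<Sum>a\<in>multi_indices d n. (c a + c' a) * monomial e n a f)"
    by (simp add: sum.distrib distrib_right)
  then show ?thesis by (rule poly_spaceI)
qed

lemma poly_space_diff:
  assumes "p \<in> poly_space e d n" "q \<in> poly_space e d n"
  shows "(\<lambda>f. p f - q f) \<in> poly_space e d n"
  using poly_space_add[OF assms(1) poly_space_cmult[OF assms(2), of "-1"]] by simp

lemma poly_space_sum:
  assumes "\<And>i. i \<in> I \<Longrightarrow> P i \<in> poly_space e d n"
  shows "(\<lambda>f. \<Sum>i\<in>I. P i f) \<in> poly_space e d n"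
  using assms
proof (induction I rule: infinite_finite_induct)
  case (insert i I)
  then show ?case using poly_space_add[of "P i" e d n "\<lambda>f. \<Sum>i\<in>I. P i f"] by simp
qed (simp_all add: poly_space_const)

lemma poly_space_mono:
  assumes "d \<le> d'" "n \<le> n'"
  shows "poly_space e d n \<subseteq> poly_space e d' n'"
proof
  fix p assume "p \<in> poly_space e d n"
  then obtain c where p: "p = (\<lambda>f. \<Sum>a\<in>multi_indices d n. c a * monomial e n a f)"
    by (rule poly_spaceE)
  have "monomial e n a \<in> poly_space e d' n'" if "a \<in> multi_indices d n" for a
    using poly_space_monomial[of a d' n' e] multi_indices_mono[OF assms] that
      monomial_harmonic_mono[OF that assms(2), of e] by auto
  then show "p \<in> poly_space e d' n'"
    unfolding p by (intro poly_space_sum poly_space_cmult)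
qed

lemma poly_space_mult:
  assumes "p \<in> poly_space e d n" "q \<in> poly_space e d' n"
  shows "(\<lambda>f. p f * q f) \<in> poly_space e (d + d') n"
proof -
  obtain c where p: "p = (\<lambda>f. \<Sum>a\<in>multi_indices d n. c a * monomial e n a f)"
    using assms(1) by (rule poly_spaceE)
  obtain c' where q: "q = (\<lambda>f. \<Sum>b\<in>multi_indices d' n. c' b * monomial e n b f)"
    using assms(2) by (rule poly_spaceE)
  have "(\<lambda>f. p f * q f) = (\<lambda>f. \<Sum>a\<in>multi_indices d n. \<Sum>b\<in>multi_indices d' n.
          (c a * c' b) * monomial e n (\<lambda>k. a k + b k) f)"
    unfolding p q sum_product monomial_add by (simp add: mult_ac)
  then show ?thesis
    by (simp only:) (intro poly_space_sum poly_space_cmult poly_space_monomial multi_indices_add)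
qed

lemma poly_space_power:
  assumes "p \<in> poly_space e d n"
  shows "(\<lambda>f. p f ^ m) \<in> poly_space e (m * d) n"
proof (induction m)
  case 0
  show ?case by (simp add: poly_space_const)
next
  case (Suc m)
  show ?case using poly_space_mult[OF assms Suc] by simp
qed

lemma poly_space_inner:
  assumes "k \<in> {1..n}"
  shows "(\<lambda>f. inner f (e k)) \<in> poly_space e 1 n"
proof -
  define a where "a = (\<lambda>j. if j = k then 1 else 0 :: nat)"
  have "a \<in> multi_indices 1 n"
    using assms by (simp add: multi_indices_def a_def)
  moreover have "monomial e n a = (\<lambda>f. inner f (e k))"
    using assms by (simp add: monomial_def a_def fun_eq_iff if_distrib[where f = "\<lambda>m. _ ^ m"] cong: if_cong)
  ultimately show ?thesis
    using poly_space_monomial by metis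
qed

lemma continuous_on_poly_space:
  assumes "p \<in> poly_space e d n"
  shows "continuous_on S p"
proof -
  obtain c where "p = (\<lambda>f. \<Sum>a\<in>multi_indices d n. c a * monomial e n a f)"
    using assms by (rule poly_spaceE)
  then show ?thesis unfolding monomial_def by (simp add: continuous_intros)
qed

definition coeff_sq_sum :: "(nat \<Rightarrow> 'a::real_inner) \<Rightarrow> nat \<Rightarrow> 'a \<Rightarrow> real" where
  "coeff_sq_sum e N x = (\<Sum>k=1..N. (inner x (e k))\<^sup>2)"

lemma coeff_sq_sum_nonneg: "0 \<le> coeff_sq_sum e N x"
  unfolding coeff_sq_sum_def by (intro sum_nonneg) auto

lemma coeff_sq_le_coeff_sq_sum: "1 \<le> k \<Longrightarrow> k \<le> N \<Longrightarrow> (inner x (e k))\<^sup>2 \<le> coeff_sq_sum e N x"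
  unfolding coeff_sq_sum_def by (rule member_le_sum) auto

lemma bessel_inequality:
  fixes e :: "nat \<Rightarrow> 'a::real_inner"
  assumes orthonormal: "\<forall>j\<ge>1. \<forall>k\<ge>1. inner (e j) (e k) = (if j = k then 1 else 0)"
  shows "coeff_sq_sum e N x \<le> (norm x)\<^sup>2"
proof -
  define y where "y = (\<Sum>k=1..N. inner x (e k) *\<^sub>R e k)"
  have xy: "inner x y = coeff_sq_sum e N x"
    by (simp add: y_def coeff_sq_sum_def inner_sum_right power2_eq_square)
  have "inner y y = (\<Sum>j=1..N. \<Sum>k=1..N. inner x (e j) * inner x (e k) * inner (e k) (e j))"
    by (simp add: y_def inner_sum_left inner_sum_right sum_distrib_left mult_ac)
  also have "\<dots> = (\<Sum>j=1..N. \<Sum>k=1..N. if k = j then inner x (e j) * inner x (e k) else 0)"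
    by (intro sum.cong refl) (use orthonormal in auto)
  also have "\<dots> = coeff_sq_sum e N x"
    by (simp add: coeff_sq_sum_def power2_eq_square)
  finally have yy: "inner y y = coeff_sq_sum e N x" .
  have "0 \<le> inner (x - y) (x - y)" by simp
  also have "\<dots> = (norm x)\<^sup>2 - coeff_sq_sum e N x"
    by (simp add: inner_diff_left inner_diff_right inner_commute xy yy power2_norm_eq_inner)
  finally show ?thesis by simp
qed

lemma coeff_sq_sum_ratio_bounds:
  fixes e :: "nat \<Rightarrow> 'a::real_inner"
  assumes orthonormal: "\<forall>j\<ge>1. \<forall>k\<ge>1. inner (e j) (e k) = (if j = k then 1 else 0)"
    and "(norm x)\<^sup>2 \<le> C"
  shows "0 \<le> coeff_sq_sum e N x / C" "coeff_sq_sum e N x / C \<le> 1"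
  using bessel_inequality[OF orthonormal, of N x] coeff_sq_sum_nonneg[of e N x] assms(2)
  by (auto simp: divide_le_eq_1)

lemma complete_system_orthogonal_eq_0:
  fixes e :: "nat \<Rightarrow> 'a::real_inner"
  assumes complete_system: "closure (span (e ` {1..})) = UNIV"
    and orthogonal: "\<forall>k\<ge>1. inner x (e k) = 0"
  shows "x = 0"
proof -
  have "span (e ` {1..}) \<subseteq> {y. inner x y = 0}"
    by (rule span_minimal) (use orthogonal in \<open>auto intro: subspace_hyperplane\<close>)
  then have "closure (span (e ` {1..})) \<subseteq> {y. inner x y = 0}"
    by (rule closure_minimal) (rule closed_hyperplane)
  then have "inner x x = 0" using complete_system by blast
  then show ?thesis by simp
qed

definition peak :: "(nat \<Rightarrow> 'a::real_inner) \<Rightarrow> real \<Rightarrow> 'a \<Rightarrow> nat \<Rightarrow> 'a \<Rightarrow> real" where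
  "peak e C h N f = (1 - coeff_sq_sum e N (f - h) / C) ^ N"

lemma peak_at_center: "peak e C h N h = 1"
  by (simp add: peak_def coeff_sq_sum_def)

lemma peak_in_poly_space: "peak e C h N \<in> poly_space e (2 * N) N"
proof -
  have "(\<lambda>f. (inner f (e k) - inner h (e k))\<^sup>2) \<in> poly_space e (2 * 1) N" if "k \<in> {1..N}" for k
    by (intro poly_space_power poly_space_diff poly_space_inner poly_space_const that)
  then have "(\<lambda>f. 1 - (1 / C) * coeff_sq_sum e N (f - h)) \<in> poly_space e 2 N"
    unfolding coeff_sq_sum_def inner_diff_left
    by (intro poly_space_diff poly_space_const poly_space_cmult poly_space_sum) auto
  from poly_space_power[OF this, of N] show ?thesis
    by (simp add: peak_def[abs_def] mult.commute)
qed

lemma abs_peak_le_one: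
  assumes orthonormal: "\<forall>j\<ge>1. \<forall>k\<ge>1. inner (e j) (e k) = (if j = k then 1 else 0)"
    and "(norm (f - h))\<^sup>2 \<le> C"
  shows "\<bar>peak e C h N f\<bar> \<le> 1"
  using coeff_sq_sum_ratio_bounds[OF assms, of N]
  unfolding peak_def power_abs by (intro power_le_one) auto

lemma peak_tendsto_indicator:
  assumes orthonormal: "\<forall>j\<ge>1. \<forall>k\<ge>1. inner (e j) (e k) = (if j = k then 1 else 0)"
    and complete_system: "closure (span (e ` {1..})) = UNIV"
    and f_near: "(norm (f - h))\<^sup>2 < C"
  shows "(\<lambda>N. peak e C h N f) \<longlonglongrightarrow> indicator {h} f"
proof (cases "f = h")
  case True
  then show ?thesis by (simp add: peak_at_center)
next
  case False
  then obtain K where K: "K \<ge> 1" "inner (f - h) (e K) \<noteq> 0"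
    using complete_system_orthogonal_eq_0[OF complete_system, of "f - h"] by auto
  define c where "c = (inner (f - h) (e K))\<^sup>2"
  have c_le: "c \<le> coeff_sq_sum e N (f - h)" if "K \<le> N" for N
    unfolding c_def using K(1) that by (rule coeff_sq_le_coeff_sq_sum)
  have "0 < c" using K(2) by (simp add: c_def)
  moreover have "c < C"
    using c_le[of K] bessel_inequality[OF orthonormal, of K "f - h"] f_near by simp
  ultimately have r: "0 \<le> 1 - c / C" "1 - c / C < 1" by simp_all
  have base_bounds: "0 \<le> 1 - coeff_sq_sum e N (f - h) / C" for N
    using coeff_sq_sum_ratio_bounds[OF orthonormal, of "f - h" C N] f_near by simp
  have "(\<lambda>N. peak e C h N f) \<longlonglongrightarrow> 0"
  proof (rule tendsto_sandwich[where f = "\<lambda>_. 0" and h = "\<lambda>N. (1 - c / C) ^ N"])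
    show "\<forall>\<^sub>F N in sequentially. 0 \<le> peak e C h N f"
      using base_bounds by (simp add: peak_def)
    have "peak e C h N f \<le> (1 - c / C) ^ N" if "K \<le> N" for N
      unfolding peak_def
      using c_le[OF that] \<open>c < C\<close> \<open>0 < c\<close> base_bounds[of N]
      by (intro power_mono) (simp_all add: divide_right_mono)
    then show "\<forall>\<^sub>F N in sequentially. peak e C h N f \<le> (1 - c / C) ^ N"
      unfolding eventually_sequentially by blast
    show "(\<lambda>N. (1 - c / C) ^ N) \<longlonglongrightarrow> 0"
      using r by (intro LIMSEQ_power_zero) simp
  qed simp
  then show ?thesis using False by simp
qed

lemma integrable_continuous_on_compact_space:
  fixes g :: "'a::topological_space \<Rightarrow> real"
  assumes "finite_measure M" "space M = F" "sets M = sets (restrict_space borel F)"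
    and "compact F" "continuous_on F g"
  shows "integrable M g"
proof -
  have "g \<in> borel_measurable M"
    using borel_measurable_continuous_on_restrict[OF assms(5)]
      measurable_cong_sets[OF assms(3) refl] by blast
  moreover obtain B where "\<forall>x\<in>F. norm (g x) \<le> B"
    using compact_imp_bounded[OF compact_continuous_image[OF assms(5,4)]]
    by (auto simp: bounded_iff)
  ultimately show ?thesis
    using assms(2) by (intro finite_measure.integrable_const_bound[OF assms(1), of g B] AE_I2) auto
qed

lemma measure_singleton_le_christoffel:
  assumes "finite_measure M" "{h} \<in> sets M"
    and integrable_sq: "\<And>p. p \<in> poly_space e d n \<Longrightarrow> integrable M (\<lambda>f. (p f)\<^sup>2)"
  shows "measure M {h} \<le> christoffel M e d n h"
  unfolding christoffel_def
proof (rule cInf_greatest)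
  show "{integral\<^sup>L M (\<lambda>f. (p f)\<^sup>2) |p. p \<in> poly_space e d n \<and> p h = 1} \<noteq> {}"
    using poly_space_const[of 1 e d n] by blast
next
  fix x assume "x \<in> {integral\<^sup>L M (\<lambda>f. (p f)\<^sup>2) |p. p \<in> poly_space e d n \<and> p h = 1}"
  then obtain p where p: "p \<in> poly_space e d n" "p h = 1" and x: "x = integral\<^sup>L M (\<lambda>f. (p f)\<^sup>2)"
    by blast
  have "measure M {h} = integral\<^sup>L M (indicator {h})"
    using sets.sets_into_space[OF assms(2)] by (simp add: Int_absorb2)
  also have "\<dots> \<le> integral\<^sup>L M (\<lambda>f. (p f)\<^sup>2)"
  proof (rule integral_mono)
    show "integrable M (indicator {h} :: _ \<Rightarrow> real)"
      using assms(1,2) by (intro integrable_real_indicator) (simp_all add: finite_measure.emeasure_finite less_top[symmetric])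
    show "integrable M (\<lambda>f. (p f)\<^sup>2)" using p(1) by (rule integrable_sq)
    show "indicator {h} f \<le> (p f)\<^sup>2" for f
      using p(2) by (simp add: indicator_def)
  qed
  finally show "measure M {h} \<le> x" using x by simp
qed

lemma christoffel_le_integral:
  assumes "p \<in> poly_space e d n" "p h = 1"
  shows "christoffel M e d n h \<le> integral\<^sup>L M (\<lambda>f. (p f)\<^sup>2)"
  unfolding christoffel_def
  by (rule cInf_lower) (use assms in \<open>auto intro!: bdd_belowI[where m = 0]\<close>)

lemma tendsto_sandwich_sequence:
  fixes g :: "'b \<Rightarrow> 'a::linorder_topology"
  assumes lower: "\<forall>\<^sub>F x in F. l \<le> g x"
    and upper: "\<And>N. \<forall>\<^sub>F x in F. g x \<le> u N"
    and u: "u \<longlonglongrightarrow> l"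
  shows "(g \<longlongrightarrow> l) F"
proof (rule order_tendstoI)
  fix a assume "a < l"
  with lower show "\<forall>\<^sub>F x in F. a < g x"
    by (auto elim: eventually_mono)
next
  fix b assume "l < b"
  then obtain N where "u N < b"
    using order_tendstoD(2)[OF u] by (auto simp: eventually_sequentially)
  with upper[of N] show "\<forall>\<^sub>F x in F. g x < b"
    by (auto elim: eventually_mono)
qed

lemma bounded_imp_sq_norm_diff_bound:
  fixes F :: "'a::real_normed_vector set"
  assumes "bounded F"
  obtains C where "\<And>f. f \<in> F \<Longrightarrow> (norm (f - h))\<^sup>2 < C"
proof -
  obtain B where "\<forall>f\<in>F. dist h f \<le> B"
    using assms bounded_any_center by blast
  then have "(norm (f - h))\<^sup>2 < B\<^sup>2 + 1" if "f \<in> F" for f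
    using power_mono[OF _ norm_ge_zero, of "f - h" B 2] that by (simp add: dist_norm norm_minus_commute)
  then show thesis by (rule that)
qed

lemma integral_peak_sq_tendsto_measure_singleton:
  assumes orthonormal: "\<forall>j\<ge>1. \<forall>k\<ge>1. inner (e j) (e k) = (if j = k then 1 else 0)"
    and complete_system: "closure (span (e ` {1..})) = UNIV"
    and "finite_measure M" "space M = F" "sets M = sets (restrict_space borel F)" "compact F"
    and h_sets: "{h} \<in> sets M"
    and C: "\<And>f. f \<in> F \<Longrightarrow> (norm (f - h))\<^sup>2 < C"
  shows "(\<lambda>N. integral\<^sup>L M (\<lambda>f. (peak e C h N f)\<^sup>2)) \<longlonglongrightarrow> measure M {h}"
proof -
  have "(\<lambda>N. integral\<^sup>L M (\<lambda>f. (peak e C h N f)\<^sup>2)) \<longlonglongrightarrow> integral\<^sup>L M (indicator {h})"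
  proof (rule integral_dominated_convergence[where w = "\<lambda>_. 1"])
    show "(\<lambda>f. (peak e C h N f)\<^sup>2) \<in> borel_measurable M" for N
      using continuous_on_poly_space[OF peak_in_poly_space]
      by (intro borel_measurable_integrable integrable_continuous_on_compact_space[OF assms(3-6)]
          continuous_intros)
    have "(indicator {h} f :: real)\<^sup>2 = indicator {h} f" for f
      by (simp add: indicator_def)
    then show "AE f in M. (\<lambda>N. (peak e C h N f)\<^sup>2) \<longlonglongrightarrow> indicator {h} f"
      using tendsto_power[OF peak_tendsto_indicator[OF orthonormal complete_system C], of _ 2]
      by (intro AE_I2) (metis assms(4))
    show "AE f in M. norm ((peak e C h N f)\<^sup>2) \<le> 1" for N
      using abs_peak_le_one[OF orthonormal less_imp_le[OF C]]
      by (intro AE_I2) (simp add: assms(4) abs_square_le_1)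
  qed (use h_sets finite_measure.integrable_const[OF assms(3)] in auto)
  then show ?thesis
    using sets.sets_into_space[OF h_sets] by (simp add: Int_absorb2)
qed

theorem lemma4:
  fixes e :: "nat \<Rightarrow> 'a::{real_inner, complete_space}"
    and F :: "'a set" and M :: "'a measure" and h :: 'a
  assumes orthonormal: "\<forall>j\<ge>1. \<forall>k\<ge>1. inner (e j) (e k) = (if j = k then 1 else 0)"
    and complete_system: "closure (span (e ` {1..})) = UNIV"
    and F_compact: "compact F"
    and M_prob: "prob_space M"
    and M_space: "space M = F"
    and M_sets: "sets M = sets (restrict_space borel F)"
    and h_in: "h \<in> F"
  shows "((\<lambda>(d, n). christoffel M e d n h) \<longlongrightarrow> measure M {h})
           (sequentially \<times>\<^sub>F sequentially)"
proof -
  interpret prob_space M by (rule M_prob)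
  have h_sets: "{h} \<in> sets M"
    using h_in unfolding M_sets sets_restrict_space by (auto intro!: image_eqI[of _ _ "{h}"])
  have integrable_sq: "integrable M (\<lambda>f. (p f)\<^sup>2)" if "p \<in> poly_space e d n" for p d n
    using continuous_on_poly_space[OF that]
    by (intro integrable_continuous_on_compact_space[OF finite_measure_axioms M_space M_sets F_compact]
        continuous_intros)
  obtain C where C: "\<And>f. f \<in> F \<Longrightarrow> (norm (f - h))\<^sup>2 < C"
    using bounded_imp_sq_norm_diff_bound[OF compact_imp_bounded[OF F_compact], where h = h] by blast
  show ?thesis
  proof (rule tendsto_sandwich_sequence)
    show "(\<lambda>N. integral\<^sup>L M (\<lambda>f. (peak e C h N f)\<^sup>2)) \<longlonglongrightarrow> measure M {h}"
      by (rule integral_peak_sq_tendsto_measure_singleton[OF orthonormal complete_system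
            finite_measure_axioms M_space M_sets F_compact h_sets C])
    show "\<forall>\<^sub>F x in sequentially \<times>\<^sub>F sequentially. measure M {h} \<le> (\<lambda>(d, n). christoffel M e d n h) x"
      using measure_singleton_le_christoffel[OF finite_measure_axioms h_sets integrable_sq]
      by (intro always_eventually) auto
    fix N
    have "christoffel M e d n h \<le> integral\<^sup>L M (\<lambda>f. (peak e C h N f)\<^sup>2)"
      if "2 * N \<le> d" "2 * N \<le> n" for d n
      using that poly_space_mono[of "2 * N" d N n e] peak_in_poly_space[of e C h N]
      by (intro christoffel_le_integral peak_at_center) auto
    then show "\<forall>\<^sub>F x in sequentially \<times>\<^sub>F sequentially.
        (\<lambda>(d, n). christoffel M e d n h) x \<le> integral\<^sup>L M (\<lambda>f. (peak e C h N f)\<^sup>2)"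
      unfolding eventually_prod_sequentially by auto
  qed
qed

end
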